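(* Let $u\in\mathbb{Z}^2$, $d\ge0$ and let $\Psi\subset\mathbb{Z}^2$ be a random set. Let $E$ be the event that there is a $\boxtimes$-path in $\mathbb{Z}^2\setminus\Psi$ starting at $u$ and ending at some $v$ with $\|v-u\|_\infty\ge d$. Then $$\mathbb{P}(E)\le\Big(\frac{\mathfrak p(\Psi)}{\varepsilon_0}\Big)^{1+d}.$$
   Context: $\varepsilon_0=1/21$. $\square$-adjacency on $\mathbb{Z}^2$: $\|u-v\|_1=1$; $\boxtimes$-adjacency: $\|u-v\|_\infty=1$. A random set $B\subset\mathbb{Z}^2$ on a probability space $(\cdot,\mathbb{P})$ is $\varepsilon$-rare if $\mathbb{P}(A\subset B)\le\varepsilon^{\#A}$ for every finite $A$. A random set $\Psi\subset\mathbb{Z}^2$ is $\varepsilon$-strongly percolating if either $\varepsilon\ge\varepsilon_0$ or there is an $\varepsilon$-rare random set $B$ on the same probability space such that $\Psi$ almost surely contains an infinite $\square$-connected component of $\mathbb{Z}^2\setminus B$. $\mathfrak p(\Psi)=\inf\{\varepsilon\ge0:\Psi\text{ is }\varepsilon\text{-strongly percolating}\}$. *)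

theory Defs
  imports "HOL-Probability.Probability"
begin

type_synonym pt = "int \<times> int"

definition eps0 :: real where "eps0 = 1 / 21"

definition norm1 :: "pt \<Rightarrow> int" where
  "norm1 z = \<bar>fst z\<bar> + \<bar>snd z\<bar>"

definition normInf :: "pt \<Rightarrow> int" where
  "normInf z = max \<bar>fst z\<bar> \<bar>snd z\<bar>"

definition sq_adj :: "pt \<Rightarrow> pt \<Rightarrow> bool" where
  "sq_adj u v \<longleftrightarrow> norm1 (u - v) = 1"

definition bx_adj :: "pt \<Rightarrow> pt \<Rightarrow> bool" where
  "bx_adj u v \<longleftrightarrow> normInf (u - v) = 1"

definition component :: "(pt \<Rightarrow> pt \<Rightarrow> bool) \<Rightarrow> pt set \<Rightarrow> pt \<Rightarrow> pt set" where
  "component adj S x = {y. (\<lambda>a b. a \<in> S \<and> b \<in> S \<and> adj a b)\<^sup>*\<^sup>* x y}"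

definition random_set :: "'a measure \<Rightarrow> ('a \<Rightarrow> pt set) \<Rightarrow> bool" where
  "random_set M B \<longleftrightarrow> (\<forall>z. {\<omega> \<in> space M. z \<in> B \<omega>} \<in> sets M)"

definition rare :: "'a measure \<Rightarrow> real \<Rightarrow> ('a \<Rightarrow> pt set) \<Rightarrow> bool" where
  "rare M \<epsilon> B \<longleftrightarrow> random_set M B \<and>
     (\<forall>A. finite A \<longrightarrow> measure M {\<omega> \<in> space M. A \<subseteq> B \<omega>} \<le> \<epsilon> ^ card A)"

definition strongly_percolating :: "'a measure \<Rightarrow> real \<Rightarrow> ('a \<Rightarrow> pt set) \<Rightarrow> bool" where
  "strongly_percolating M \<epsilon> \<Psi> \<longleftrightarrow> \<epsilon> \<ge> eps0 \<or>
     (\<exists>B. rare M \<epsilon> B \<and>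
        (AE \<omega> in M. \<exists>x. x \<notin> B \<omega> \<and> infinite (component sq_adj (- B \<omega>) x)
                      \<and> component sq_adj (- B \<omega>) x \<subseteq> \<Psi> \<omega>))"

definition perc :: "'a measure \<Rightarrow> ('a \<Rightarrow> pt set) \<Rightarrow> real" where
  "perc M \<Psi> = Inf {\<epsilon>. \<epsilon> \<ge> 0 \<and> strongly_percolating M \<epsilon> \<Psi>}"

definition bx_path_avoiding :: "pt set \<Rightarrow> pt list \<Rightarrow> bool" where
  "bx_path_avoiding S p \<longleftrightarrow> p \<noteq> [] \<and> (\<forall>z\<in>set p. z \<notin> S) \<and> successively bx_adj p"

end

theory Submission
  imports Defs
begin

text \<open>If some \<open>\<boxtimes>\<close>-path avoiding \<open>\<Psi>\<close> leads from \<open>u\<close> to distance \<open>d\<close>, look at an infinite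
  \<open>\<square>\<close>-cluster \<open>C \<subseteq> \<Psi>\<close> of the complement of an \<open>\<epsilon>\<close>-rare set \<open>B\<close>. The \<open>\<boxtimes>\<close>-component of
  \<open>u\<close> in the complement of \<open>C\<close> (the hole) contains the path, and its outer boundary (hole points
  \<open>\<square>\<close>-adjacent to \<open>C\<close>) lies in \<open>B\<close> and is \<open>\<boxtimes>\<close>-connected, by unicoherence of the plane
  applied to the unions of unit squares of the hole and of its complement. The boundary is at
  least as wide as the hole, so it contains a self-avoiding \<open>\<boxtimes>\<close>-walk of \<open>L \<ge> d\<close> steps
  starting at distance at most \<open>L\<close> from \<open>u\<close>. A union bound over the start point and the
  \<open>8\<^sup>L\<close> walks gives probability at most \<open>(21 \<epsilon>) ^ (1 + \<lceil>d\<rceil>)\<close>; then let \<open>\<epsilon>\<close> decrease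
  to \<open>perc M \<Psi>\<close>.\<close>

lemma sq_adj_sym: "sq_adj a b \<Longrightarrow> sq_adj b a"
  by (auto simp: sq_adj_def norm1_def)

lemma bx_adj_sym: "bx_adj a b \<Longrightarrow> bx_adj b a"
  by (auto simp: bx_adj_def normInf_def)

lemma sq_adj_imp_bx_adj: "sq_adj a b \<Longrightarrow> bx_adj a b"
  by (auto simp: sq_adj_def bx_adj_def norm1_def normInf_def)

lemma normInf_nonneg: "normInf z \<ge> 0"
  by (auto simp: normInf_def)

lemma normInf_eq_0_iff: "normInf z = 0 \<longleftrightarrow> z = 0"
  by (cases z) (auto simp: normInf_def max_def zero_prod_def)

lemma normInf_diff_commute: "normInf (a - b) = normInf (b - a)"
  by (auto simp: normInf_def)

lemma normInf_diff_triangle: "normInf (a - c) \<le> normInf (a - b) + normInf (b - c)"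
  by (auto simp: normInf_def)

lemma bx_adj_iff_normInf: "bx_adj a b \<longleftrightarrow> a \<noteq> b \<and> normInf (a - b) \<le> 1"
  using normInf_nonneg[of "a - b"] normInf_eq_0_iff[of "a - b"] by (auto simp: bx_adj_def)

lemma finite_normInf_ball: "finite {z. normInf (z - u) \<le> R}"
proof (rule finite_subset)
  show "{z. normInf (z - u) \<le> R} \<subseteq> {fst u - R .. fst u + R} \<times> {snd u - R .. snd u + R}"
    by (auto simp: normInf_def)
qed auto

lemma card_normInf_sphere: "card {r. normInf (r - u) = int j} \<le> 8 * j + 1"
proof -
  define box where "box i = {fst u - int i .. fst u + int i} \<times> {snd u - int i .. snd u + int i}" for i
  have box_finite: "finite (box i)" for i
    unfolding box_def by simp
  have card_box: "card (box i) = (2 * i + 1) * (2 * i + 1)" for i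
  proof -
    have "card {c - int i .. c + int i} = 2 * i + 1" for c :: int
      using nat_int[of "2 * i + 1"] by simp
    then show ?thesis
      unfolding box_def card_cartesian_product by simp
  qed
  have "{r. normInf (r - u) = int j} \<subseteq> box j"
    unfolding box_def by (auto simp: normInf_def)
  show ?thesis
  proof (cases j)
    case 0
    then show ?thesis
      using card_mono[OF box_finite \<open>_ \<subseteq> box j\<close>] card_box[of j] by simp
  next
    case (Suc i)
    have sphere: "{r. normInf (r - u) = int j} \<subseteq> box j - box i"
      unfolding box_def Suc by (auto simp: normInf_def)
    have "box i \<subseteq> box j"
      unfolding box_def Suc by auto
    then have "card (box j - box i) = 8 * j"
      using card_Diff_subset[OF box_finite] card_box unfolding Suc by (simp add: algebra_simps)
    then show ?thesis
      using card_mono[OF _ sphere] box_finite by fastforce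
  qed
qed

lemma finite_bx_neighbours: "finite {s. bx_adj r s}"
  and card_bx_neighbours: "card {s. bx_adj r s} \<le> 8"
proof -
  define A where "A = {fst r - 1 .. fst r + 1} \<times> {snd r - 1 .. snd r + 1}"
  have nbrs: "{s. bx_adj r s} \<subseteq> A - {r}"
    unfolding A_def by (auto simp: bx_adj_def normInf_def)
  have "r \<in> A" "finite A" "card A = 9"
    unfolding A_def by (cases r; simp add: card_cartesian_product)+
  then have "finite (A - {r})" "card (A - {r}) = 8"
    by simp_all
  then show "finite {s. bx_adj r s}" "card {s. bx_adj r s} \<le> 8"
    using finite_subset[OF nbrs] card_mono[OF _ nbrs] by auto
qed

lemma sq_adj_connected: "sq_adj\<^sup>*\<^sup>* z w"
proof -
  have "sq_adj\<^sup>*\<^sup>* z w" if "norm1 (w - z) = int n" for n z w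
    using that
  proof (induction n arbitrary: z)
    case 0
    then have "z = w"
      by (auto simp: norm1_def prod_eq_iff)
    then show ?case
      by simp
  next
    case (Suc n)
    define z' where "z' = (if fst w \<noteq> fst z then z + (sgn (fst w - fst z), 0)
                                               else z + (0, sgn (snd w - snd z)))"
    have "sq_adj z z'" "norm1 (w - z') = int n"
      using Suc.prems by (auto simp: z'_def sq_adj_def norm1_def sgn_if)
    then show ?case
      using Suc.IH converse_rtranclp_into_rtranclp by metis
  qed
  moreover have "norm1 (w - z) = int (nat (norm1 (w - z)))"
    by (simp add: norm1_def)
  ultimately show ?thesis
    by blast
qed

lemma component_refl: "x \<in> component adj S x"
  by (simp add: component_def)

lemma component_subset: "x \<in> S \<Longrightarrow> component adj S x \<subseteq> S"
proof
  fix y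
  assume "x \<in> S" "y \<in> component adj S x"
  then have "(\<lambda>a b. a \<in> S \<and> b \<in> S \<and> adj a b)\<^sup>*\<^sup>* x y" "x \<in> S"
    by (simp_all add: component_def)
  then show "y \<in> S"
    by (induction rule: rtranclp_induct) auto
qed

lemma component_step:
  "y \<in> component adj S x \<Longrightarrow> x \<in> S \<Longrightarrow> z \<in> S \<Longrightarrow> adj y z \<Longrightarrow> z \<in> component adj S x"
  using component_subset[of x S adj] unfolding component_def
  by (auto intro: rtranclp.rtrancl_into_rtrancl)

lemma component_rtranclp:
  assumes "y \<in> component adj S x" "x \<in> S"
  shows "(\<lambda>a b. a \<in> component adj S x \<and> b \<in> component adj S x \<and> adj a b)\<^sup>*\<^sup>* x y"
proof -
  have "(\<lambda>a b. a \<in> S \<and> b \<in> S \<and> adj a b)\<^sup>*\<^sup>* x y"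
    using assms(1) by (simp add: component_def)
  then show ?thesis
  proof (induction rule: rtranclp_induct)
    case (step y z)
    then have "y \<in> component adj S x" "z \<in> component adj S x"
      unfolding component_def by (auto intro: rtranclp.rtrancl_into_rtrancl)
    with step show ?case
      by (auto intro: rtranclp.rtrancl_into_rtrancl)
  qed simp
qed

lemma rtranclp_sym: "(\<And>a b. R a b \<Longrightarrow> R b a) \<Longrightarrow> R\<^sup>*\<^sup>* x y \<Longrightarrow> R\<^sup>*\<^sup>* y x"
  by (metis sympD sympI symp_rtranclp)

lemma rtranclp_first_entry:
  assumes "R\<^sup>*\<^sup>* a b" "a \<notin> C" "b \<in> C"
  shows "\<exists>p q. p \<notin> C \<and> q \<in> C \<and> R p q \<and> (\<lambda>x y. x \<notin> C \<and> y \<notin> C \<and> R x y)\<^sup>*\<^sup>* a p"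
  using assms
proof (induction rule: converse_rtranclp_induct)
  case (step a a')
  show ?case
  proof (cases "a' \<in> C")
    case False
    with step obtain p q where "p \<notin> C" "q \<in> C" "R p q"
      and "(\<lambda>x y. x \<notin> C \<and> y \<notin> C \<and> R x y)\<^sup>*\<^sup>* a' p"
      by blast
    with step False show ?thesis
      by (blast intro: converse_rtranclp_into_rtranclp)
  qed (use step in blast)
qed simp

lemma rtranclp_restricted_imp_path:
  assumes "(\<lambda>x y. x \<in> A \<and> y \<in> A \<and> R x y)\<^sup>*\<^sup>* a b" "a \<in> A"
  shows "\<exists>q. q \<noteq> [] \<and> hd q = a \<and> last q = b \<and> set q \<subseteq> A \<and> successively R q"
  using assms
proof (induction rule: rtranclp_induct)
  case base
  then show ?case
    by (intro exI[of _ "[a]"]) simp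
next
  case (step b c)
  then obtain q where "q \<noteq> []" "hd q = a" "last q = b" "set q \<subseteq> A" "successively R q"
    by blast
  with step show ?case
    by (intro exI[of _ "q @ [c]"]) (auto simp: successively_append_iff)
qed

lemma successively_remove_loops:
  assumes "successively R q" "q \<noteq> []"
  shows "\<exists>q'. successively R q' \<and> q' \<noteq> [] \<and> hd q' = hd q \<and> last q' = last q
              \<and> distinct q' \<and> set q' \<subseteq> set q"
  using assms
proof (induction "length q" arbitrary: q rule: less_induct)
  case less
  show ?case
  proof (cases "distinct q")
    case False
    then obtain xs ys zs y where q: "q = xs @ [y] @ ys @ [y] @ zs"
      using not_distinct_decomp by blast
    define q1 where "q1 = xs @ [y] @ zs"
    have "successively R ((xs @ [y]) @ ys @ [y] @ zs)" "successively R ((xs @ y # ys) @ y # zs)"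
      using less.prems(1) q by simp_all
    then have "successively R (xs @ [y])" "successively R (y # zs)"
      unfolding successively_append_iff by blast+
    then have "successively R q1"
      unfolding q1_def by (auto simp: successively_append_iff successively_Cons)
    moreover have "q1 \<noteq> []" "length q1 < length q"
      unfolding q1_def q by simp_all
    ultimately obtain q' where "successively R q'" "q' \<noteq> []" "hd q' = hd q1" "last q' = last q1"
      "distinct q'" "set q' \<subseteq> set q1"
      using less.hyps by blast
    moreover have "hd q1 = hd q"
      unfolding q1_def q by (cases xs) simp_all
    moreover have "last q1 = last q"
      unfolding q1_def q by (cases zs) simp_all
    moreover have "set q1 \<subseteq> set q"
      unfolding q1_def q by auto
    ultimately show ?thesis
      by (intro exI[of _ q']) auto
  qed (use less.prems in blast)
qed

lemma normInf_last_hd_le: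
  "successively bx_adj q \<Longrightarrow> q \<noteq> [] \<Longrightarrow> normInf (last q - hd q) \<le> int (length q) - 1"
proof (induction q rule: induct_list012)
  case (3 x y zs)
  have "normInf (last (y # zs) - x) \<le> normInf (last (y # zs) - y) + normInf (y - x)"
    by (rule normInf_diff_triangle)
  moreover have "normInf (y - x) = 1"
    using "3.prems" normInf_diff_commute[of y x] by (simp add: bx_adj_def)
  ultimately show ?case
    using "3.IH"(2) "3.prems" by simp
qed (auto simp: normInf_def)

definition bx_walks :: "pt \<Rightarrow> nat \<Rightarrow> pt list set" where
  "bx_walks r m = {q. length q = Suc m \<and> hd q = r \<and> successively bx_adj q}"

lemma finite_bx_walks: "finite (bx_walks r m)"
  and card_bx_walks: "card (bx_walks r m) \<le> 8 ^ m"
proof (induction m arbitrary: r)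
  case 0
  have "bx_walks r 0 = {[r]}" for r
    by (auto simp: bx_walks_def length_Suc_conv)
  then show "finite (bx_walks r 0)" "card (bx_walks r 0) \<le> 8 ^ 0" for r
    by simp_all
next
  case (Suc m)
  fix r
  let ?N = "{s. bx_adj r s}"
  have walks: "bx_walks r (Suc m) \<subseteq> (\<Union>s\<in>?N. Cons r ` bx_walks s m)"
    by (auto simp: bx_walks_def length_Suc_conv)
  have "finite (\<Union>s\<in>?N. Cons r ` bx_walks s m)"
    using finite_bx_neighbours Suc.IH by blast
  then show "finite (bx_walks r (Suc m))"
    by (rule finite_subset[OF walks])
  have "card (bx_walks r (Suc m)) \<le> card (\<Union>s\<in>?N. Cons r ` bx_walks s m)"
    using walks \<open>finite (\<Union>s\<in>?N. _)\<close> by (rule card_mono[rotated])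
  also have "\<dots> \<le> (\<Sum>s\<in>?N. card (Cons r ` bx_walks s m))"
    using finite_bx_neighbours by (rule card_UN_le)
  also have "\<dots> \<le> (\<Sum>s\<in>?N. 8 ^ m)"
    using card_image_le[OF Suc.IH(1)] Suc.IH(2) by (meson order_trans sum_mono)
  also have "\<dots> \<le> 8 ^ Suc m"
    using card_bx_neighbours[of r] by simp
  finally show "card (bx_walks r (Suc m)) \<le> 8 ^ Suc m" .
qed

subsection \<open>Unit squares\<close>

definition unit_square :: "pt \<Rightarrow> (real \<times> real) set" where
  "unit_square z = {of_int (fst z) .. of_int (fst z) + 1} \<times> {of_int (snd z) .. of_int (snd z) + 1}"

lemma connected_unit_square: "connected (unit_square z)"
  unfolding unit_square_def by (intro convex_connected convex_Times) auto

lemma closed_unit_square: "closed (unit_square z)"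
  unfolding unit_square_def by (intro closed_Times) auto

lemma Union_unit_square_Un_compl: "\<Union>(unit_square ` A) \<union> \<Union>(unit_square ` (- A)) = UNIV"
proof -
  have "p \<in> unit_square (\<lfloor>fst p\<rfloor>, \<lfloor>snd p\<rfloor>)" for p
    unfolding unit_square_def by (cases p) (auto simp: mem_Times_iff)
  then show ?thesis
    by blast
qed

lemma unit_square_Int_imp_normInf:
  assumes "p \<in> unit_square a" "p \<in> unit_square b"
  shows "normInf (a - b) \<le> 1"
proof -
  have "of_int (fst a) \<le> (of_int (fst b) + 1 :: real)" "of_int (fst b) \<le> (of_int (fst a) + 1 :: real)"
    "of_int (snd a) \<le> (of_int (snd b) + 1 :: real)" "of_int (snd b) \<le> (of_int (snd a) + 1 :: real)"
    using assms by (auto simp: unit_square_def mem_Times_iff)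
  then have "fst a \<le> fst b + 1" "fst b \<le> fst a + 1" "snd a \<le> snd b + 1" "snd b \<le> snd a + 1"
    by linarith+
  then show ?thesis
    by (auto simp: normInf_def)
qed

lemma unit_square_Int_swap:
  "p \<in> unit_square a \<Longrightarrow> p \<in> unit_square b \<Longrightarrow> p \<in> unit_square (fst b, snd a)"
  by (auto simp: unit_square_def mem_Times_iff)

lemma unit_square_Int_nonempty:
  assumes "normInf (a - b) \<le> 1"
  shows "unit_square a \<inter> unit_square b \<noteq> {}"
proof -
  let ?p = "(of_int (max (fst a) (fst b)), of_int (max (snd a) (snd b))) :: real \<times> real"
  have "fst a \<le> fst b + 1" "fst b \<le> fst a + 1" "snd a \<le> snd b + 1" "snd b \<le> snd a + 1"
    using assms by (auto simp: normInf_def)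
  then have "?p \<in> unit_square a \<inter> unit_square b"
    by (auto simp: unit_square_def mem_Times_iff max_def)
  then show ?thesis
    by blast
qed

lemma closed_Union_unit_square: "closed (\<Union>(unit_square ` A))"
proof -
  have "locally_finite_in euclidean (unit_square ` A)"
    unfolding locally_finite_in_def
  proof (intro conjI ballI)
    fix x :: "real \<times> real"
    let ?F = "{\<lfloor>fst x\<rfloor> - 2 .. \<lfloor>fst x\<rfloor> + 2} \<times> {\<lfloor>snd x\<rfloor> - 2 .. \<lfloor>snd x\<rfloor> + 2}"
    have "z \<in> ?F" if "q \<in> unit_square z" "dist x q < 1" for z q
    proof -
      have "dist (fst x) (fst q) < 1" "dist (snd x) (snd q) < 1"
        using that(2) dist_fst_le[of x q] dist_snd_le[of x q] by linarith+
      moreover have "of_int (fst z) \<le> fst q" "fst q \<le> of_int (fst z) + 1"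
         "of_int (snd z) \<le> snd q" "snd q \<le> of_int (snd z) + 1"
        using that(1) by (auto simp: unit_square_def mem_Times_iff)
      ultimately have "of_int (fst z) < fst x + 1" "fst x < of_int (fst z) + 2"
          "of_int (snd z) < snd x + 1" "snd x < of_int (snd z) + 2"
        by (auto simp: dist_real_def abs_less_iff)
      then have "fst z - 1 \<le> \<lfloor>fst x\<rfloor>" "\<lfloor>fst x\<rfloor> < fst z + 2"
          "snd z - 1 \<le> \<lfloor>snd x\<rfloor>" "\<lfloor>snd x\<rfloor> < snd z + 2"
        by (simp_all add: le_floor_iff floor_less_iff)
      then show "z \<in> ?F"
        by (cases z) auto
    qed
    then have "{U \<in> unit_square ` A. U \<inter> ball x 1 \<noteq> {}} \<subseteq> unit_square ` ?F"
      by (auto simp: image_iff)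
    then have "finite {U \<in> unit_square ` A. U \<inter> ball x 1 \<noteq> {}}"
      by (rule finite_subset) auto
    then show "\<exists>V. openin euclidean V \<and> x \<in> V \<and> finite {U \<in> unit_square ` A. U \<inter> V \<noteq> {}}"
      by (intro exI[of _ "ball x 1"]) auto
  qed auto
  then show ?thesis
    using closedin_locally_finite_Union[of "unit_square ` A" euclidean] closed_unit_square
    unfolding closed_closedin by blast
qed

lemma connected_Union_unit_square:
  assumes "z0 \<in> A" "\<And>z. z \<in> A \<Longrightarrow> (\<lambda>a b. a \<in> A \<and> b \<in> A \<and> bx_adj a b)\<^sup>*\<^sup>* z0 z"
  shows "connected (\<Union>(unit_square ` A))"
proof -
  have "\<exists>X. connected X \<and> X \<subseteq> \<Union>(unit_square ` A) \<and> unit_square z0 \<subseteq> X \<and> unit_square z \<subseteq> X"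
    if "(\<lambda>a b. a \<in> A \<and> b \<in> A \<and> bx_adj a b)\<^sup>*\<^sup>* z0 z" for z
    using that
  proof (induction rule: rtranclp_induct)
    case base
    then show ?case
      using connected_unit_square assms(1) by blast
  next
    case (step b c)
    then obtain X where X: "connected X" "X \<subseteq> \<Union>(unit_square ` A)"
      "unit_square z0 \<subseteq> X" "unit_square b \<subseteq> X"
      by blast
    have "unit_square b \<inter> unit_square c \<noteq> {}"
      using step(2) unit_square_Int_nonempty by (auto simp: bx_adj_def)
    then have "connected (X \<union> unit_square c)"
      using X connected_unit_square by (intro connected_Un) auto
    with X step(2) show ?case
      by (intro exI[of _ "X \<union> unit_square c"]) auto
  qed
  then have "\<forall>z\<in>A. \<exists>X. connected X \<and> X \<subseteq> \<Union>(unit_square ` A)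
                          \<and> unit_square z0 \<subseteq> X \<and> unit_square z \<subseteq> X"
    using assms(2) by blast
  then obtain X where X: "\<And>z. z \<in> A \<Longrightarrow> connected (X z) \<and> X z \<subseteq> \<Union>(unit_square ` A)
                                \<and> unit_square z0 \<subseteq> X z \<and> unit_square z \<subseteq> X z"
    by metis
  have "\<Union>(unit_square ` A) = \<Union>(X ` A)"
    using X by blast
  moreover have "(of_int (fst z0), of_int (snd z0)) \<in> unit_square z0"
    by (auto simp: unit_square_def)
  then have "\<Inter>(X ` A) \<noteq> {}"
    using X by blast
  ultimately show ?thesis
    using X by (simp only:) (intro connected_Union; auto)
qed

text \<open>Squares of distinct lattice points that are not \<open>\<boxtimes>\<close>-adjacent are disjoint, so the squares
  of the \<open>\<boxtimes>\<close>-component of \<open>a\<close> and those of the rest of \<open>A\<close> would separate \<open>K\<close>.\<close>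

lemma bx_connected_if_connected_cover:
  assumes K: "connected K" "K \<subseteq> \<Union>(unit_square ` A)" "\<And>a. a \<in> A \<Longrightarrow> unit_square a \<inter> K \<noteq> {}"
    and "a \<in> A" "b \<in> A"
  shows "(\<lambda>x y. x \<in> A \<and> y \<in> A \<and> bx_adj x y)\<^sup>*\<^sup>* a b"
proof -
  have no_separation: "V \<inter> K = {}"
    if "closed U" "closed V" "K \<subseteq> U \<union> V" "U \<inter> V \<inter> K = {}" "U \<inter> K \<noteq> {}" for U V
    using K(1) that unfolding connected_closed by blast
  define R where "R = (\<lambda>x y. x \<in> A \<and> y \<in> A \<and> bx_adj x y)"
  define X where "X = {z \<in> A. R\<^sup>*\<^sup>* a z}"
  let ?U = "\<Union>(unit_square ` X)" and ?V = "\<Union>(unit_square ` (A - X))"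
  have "?U \<inter> ?V = {}"
  proof (rule equals0I)
    fix p
    assume "p \<in> ?U \<inter> ?V"
    then obtain x y where xy: "x \<in> X" "y \<in> A - X" "p \<in> unit_square x" "p \<in> unit_square y"
      by blast
    then have "R x y"
      using unit_square_Int_imp_normInf unfolding R_def X_def by (auto simp: bx_adj_iff_normInf)
    then show False
      using xy(1,2) rtranclp.rtrancl_into_rtrancl[of R a x y] unfolding X_def by blast
  qed
  moreover have "X \<subseteq> A"
    unfolding X_def by blast
  then have "K \<subseteq> ?U \<union> ?V"
    using K(2) by blast
  moreover have "a \<in> X"
    using assms(4) unfolding X_def by simp
  then have "?U \<inter> K \<noteq> {}"
    using K(3)[OF assms(4)] by blast
  ultimately have "?V \<inter> K = {}"
    using no_separation[OF closed_Union_unit_square closed_Union_unit_square] by blast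
  then have "b \<in> X"
    using K(3)[OF assms(5)] assms(5) by blast
  then show ?thesis
    unfolding X_def R_def by simp
qed

subsection \<open>The hole of an infinite cluster around a point\<close>

locale cluster_hole =
  fixes B C :: "pt set" and u c0 :: pt
  assumes infinite_cluster: "infinite C"
    and c0_in_cluster: "c0 \<in> C"
    and cluster_connected: "\<And>z. z \<in> C \<Longrightarrow> (\<lambda>a b. a \<in> C \<and> b \<in> C \<and> sq_adj a b)\<^sup>*\<^sup>* c0 z"
    and cluster_blocked: "\<And>c w. c \<in> C \<Longrightarrow> w \<notin> C \<Longrightarrow> sq_adj c w \<Longrightarrow> w \<in> B"
    and u_notin_cluster: "u \<notin> C"
begin

definition hole :: "pt set" where
  "hole = component bx_adj (- C) u"

definition hole_boundary :: "pt set" where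
  "hole_boundary = {w \<in> hole. \<exists>c\<in>C. sq_adj w c}"

lemma u_in_hole: "u \<in> hole"
  unfolding hole_def by (rule component_refl)

lemma hole_disjoint_cluster: "w \<in> hole \<Longrightarrow> w \<notin> C"
  using component_subset[of u "- C" bx_adj] u_notin_cluster unfolding hole_def by auto

lemma hole_bx_step: "w \<in> hole \<Longrightarrow> z \<notin> C \<Longrightarrow> bx_adj w z \<Longrightarrow> z \<in> hole"
  unfolding hole_def using component_step[of w bx_adj "- C" u z] u_notin_cluster by auto

lemma sq_adj_out_of_hole: "w \<in> hole \<Longrightarrow> z \<notin> hole \<Longrightarrow> sq_adj w z \<Longrightarrow> z \<in> C"
  using hole_bx_step sq_adj_imp_bx_adj by blast

lemma hole_boundaryI: "w \<in> hole \<Longrightarrow> z \<notin> hole \<Longrightarrow> sq_adj w z \<Longrightarrow> w \<in> hole_boundary"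
  using sq_adj_out_of_hole unfolding hole_boundary_def by blast

lemma hole_boundary_subset_blocked: "hole_boundary \<subseteq> B"
  using cluster_blocked hole_disjoint_cluster sq_adj_sym unfolding hole_boundary_def by blast

lemma hole_rtranclp: "z \<in> hole \<Longrightarrow> (\<lambda>a b. a \<in> hole \<and> b \<in> hole \<and> bx_adj a b)\<^sup>*\<^sup>* u z"
  unfolding hole_def using component_rtranclp[of z bx_adj "- C" u] u_notin_cluster by auto

lemma outside_hole_rtranclp:
  assumes "z \<notin> hole"
  shows "(\<lambda>a b. a \<notin> hole \<and> b \<notin> hole \<and> bx_adj a b)\<^sup>*\<^sup>* c0 z"
proof -
  define R where "R = (\<lambda>a b. a \<notin> hole \<and> b \<notin> hole \<and> bx_adj a b)"
  have R_sym: "R a b \<Longrightarrow> R b a" for a b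
    unfolding R_def using bx_adj_sym by blast
  have cluster_R: "R\<^sup>*\<^sup>* c0 q" if "q \<in> C" for q
    using cluster_connected[OF that]
    by (rule rtranclp_mono[THEN predicate2D, rotated])
       (auto simp: R_def dest: hole_disjoint_cluster sq_adj_imp_bx_adj)
  have to_c0: "R\<^sup>*\<^sup>* z c0"
  proof (cases "z \<in> C")
    case True
    show ?thesis
      by (rule rtranclp_sym[OF R_sym cluster_R[OF True]])
  next
    case False
    then obtain p q where pq: "p \<notin> C" "q \<in> C" "sq_adj p q"
      and path: "(\<lambda>x y. x \<notin> C \<and> y \<notin> C \<and> sq_adj x y)\<^sup>*\<^sup>* z p"
      using rtranclp_first_entry[OF sq_adj_connected _ c0_in_cluster] by blast
    have "R\<^sup>*\<^sup>* z p \<and> p \<notin> hole"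
      using path
    proof (induction rule: rtranclp_induct)
      case (step y y')
      then have "y' \<notin> hole"
        using hole_bx_step[of y' y] bx_adj_sym sq_adj_imp_bx_adj by blast
      with step show ?case
        by (auto simp: R_def intro: rtranclp.rtrancl_into_rtrancl sq_adj_imp_bx_adj)
    qed (use assms in simp)
    moreover have "R p q"
      using pq hole_disjoint_cluster sq_adj_imp_bx_adj calculation unfolding R_def by blast
    ultimately have "R\<^sup>*\<^sup>* z q"
      using rtranclp.rtrancl_into_rtrancl by metis
    then show ?thesis
      using rtranclp_sym[OF R_sym cluster_R[OF pq(2)]] by (rule rtranclp_trans)
  qed
  have "R\<^sup>*\<^sup>* c0 z"
    by (rule rtranclp_sym[OF R_sym to_c0])
  then show ?thesis
    by (simp add: R_def)
qed

text \<open>A common point of the two squares also lies in the square of the corner \<open>m\<close> sharing one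
  coordinate with each, and \<open>m\<close> or the inner point is a boundary point.\<close>

lemma squares_meet_at_boundary:
  assumes "p \<in> \<Union>(unit_square ` hole)" "p \<in> \<Union>(unit_square ` (- hole))"
  shows "\<exists>w\<in>hole_boundary. p \<in> unit_square w"
proof -
  from assms obtain w z where w: "w \<in> hole" "p \<in> unit_square w"
    and z: "z \<notin> hole" "p \<in> unit_square z"
    by auto
  have close: "normInf (w - z) \<le> 1"
    using unit_square_Int_imp_normInf w z by blast
  define m where "m = (fst z, snd w)"
  have pm: "p \<in> unit_square m"
    using unit_square_Int_swap[OF w(2) z(2)] m_def by simp
  show ?thesis
  proof (cases "m \<in> hole")
    case True
    then have "m \<noteq> z"
      using z by auto
    then have "sq_adj m z"
      using close by (auto simp: m_def sq_adj_def norm1_def normInf_def prod_eq_iff)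
    then show ?thesis
      using hole_boundaryI True z pm by blast
  next
    case False
    then have "m \<noteq> w"
      using w by auto
    then have "sq_adj w m"
      using close by (auto simp: m_def sq_adj_def norm1_def normInf_def prod_eq_iff)
    then show ?thesis
      using hole_boundaryI False w by blast
  qed
qed

lemma hole_boundary_square_meets:
  assumes "r \<in> hole_boundary"
  shows "unit_square r \<inter> (\<Union>(unit_square ` hole) \<inter> \<Union>(unit_square ` (- hole))) \<noteq> {}"
proof -
  obtain c where c: "r \<in> hole" "c \<in> C" "sq_adj r c"
    using assms by (auto simp: hole_boundary_def)
  moreover have "c \<notin> hole"
    using c hole_disjoint_cluster by blast
  moreover have "unit_square r \<inter> unit_square c \<noteq> {}"
    using c(3) by (intro unit_square_Int_nonempty) (auto simp: sq_adj_def norm1_def normInf_def)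
  ultimately show ?thesis
    by blast
qed

text \<open>The plane is unicoherent, so the intersection of the (connected, closed) unions of the
  squares of the hole and of its complement is connected.\<close>

lemma hole_boundary_bx_connected:
  assumes "r \<in> hole_boundary" "y \<in> hole_boundary"
  shows "(\<lambda>a b. a \<in> hole_boundary \<and> b \<in> hole_boundary \<and> bx_adj a b)\<^sup>*\<^sup>* r y"
proof (rule bx_connected_if_connected_cover)
  let ?S = "\<Union>(unit_square ` hole)" and ?T = "\<Union>(unit_square ` (- hole))"
  have "connected ?S"
    using connected_Union_unit_square[OF u_in_hole hole_rtranclp] .
  moreover have "connected ?T"
  proof (rule connected_Union_unit_square)
    show "c0 \<in> - hole"
      using c0_in_cluster hole_disjoint_cluster by blast
    show "(\<lambda>a b. a \<in> - hole \<and> b \<in> - hole \<and> bx_adj a b)\<^sup>*\<^sup>* c0 z" if "z \<in> - hole" for z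
      using outside_hole_rtranclp that by simp
  qed
  ultimately show "connected (?S \<inter> ?T)"
    using Union_unit_square_Un_compl[of hole, symmetric] closed_Union_unit_square
    by (intro unicoherentD[OF unicoherent_UNIV]) simp_all
  show "?S \<inter> ?T \<subseteq> \<Union>(unit_square ` hole_boundary)"
    using squares_meet_at_boundary by blast
  show "unit_square a \<inter> (?S \<inter> ?T) \<noteq> {}" if "a \<in> hole_boundary" for a
    using hole_boundary_square_meets[OF that] .
qed (use assms in simp_all)

lemma hole_sq_adj_far:
  assumes R: "\<And>w. w \<in> hole_boundary \<Longrightarrow> normInf (w - u) \<le> R"
    and "z \<in> hole" "normInf (z - u) > R" "sq_adj z n"
  shows "n \<in> hole"
  using hole_boundaryI[of z n] R assms(2-) by fastforce

lemma hole_vertical_line: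
  assumes R: "\<And>w. w \<in> hole_boundary \<Longrightarrow> normInf (w - u) \<le> R"
    and z: "z \<in> hole" "\<bar>fst z - fst u\<bar> > R"
  shows "(fst z, t) \<in> hole"
proof -
  have far: "normInf ((fst z, s) - u) > R" for s
    using z(2) by (auto simp: normInf_def)
  have "(fst z, snd z + int n) \<in> hole \<and> (fst z, snd z - int n) \<in> hole" for n
  proof (induction n)
    case (Suc n)
    have "sq_adj (fst z, snd z + int n) (fst z, snd z + int (Suc n))"
      "sq_adj (fst z, snd z - int n) (fst z, snd z - int (Suc n))"
      by (auto simp: sq_adj_def norm1_def)
    then show ?case
      using hole_sq_adj_far[OF R _ far] Suc by blast
  qed (use z in simp)
  moreover have "t = snd z + int (nat (t - snd z)) \<or> t = snd z - int (nat (snd z - t))"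
    by auto
  ultimately show ?thesis
    by metis
qed

lemma hole_horizontal_line:
  assumes R: "\<And>w. w \<in> hole_boundary \<Longrightarrow> normInf (w - u) \<le> R"
    and z: "z \<in> hole" "\<bar>snd z - snd u\<bar> > R"
  shows "(t, snd z) \<in> hole"
proof -
  have far: "normInf ((s, snd z) - u) > R" for s
    using z(2) by (auto simp: normInf_def)
  have "(fst z + int n, snd z) \<in> hole \<and> (fst z - int n, snd z) \<in> hole" for n
  proof (induction n)
    case (Suc n)
    have "sq_adj (fst z + int n, snd z) (fst z + int (Suc n), snd z)"
      "sq_adj (fst z - int n, snd z) (fst z - int (Suc n), snd z)"
      by (auto simp: sq_adj_def norm1_def)
    then show ?case
      using hole_sq_adj_far[OF R _ far] Suc by blast
  qed (use z in simp)
  moreover have "t = fst z + int (nat (t - fst z)) \<or> t = fst z - int (nat (fst z - t))"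
    by auto
  ultimately show ?thesis
    by metis
qed

text \<open>Otherwise a hole point beyond the bound spreads along horizontal and vertical lines to
  everything beyond it, leaving no room for the infinite cluster.\<close>

lemma hole_bounded:
  assumes R: "\<And>w. w \<in> hole_boundary \<Longrightarrow> normInf (w - u) \<le> R"
    and w: "w \<in> hole"
  shows "normInf (w - u) \<le> R"
proof (rule ccontr)
  assume w_far: "\<not> normInf (w - u) \<le> R"
  have "\<bar>R + 1\<bar> > R"
    by arith
  obtain q where q: "q \<in> hole" "\<bar>fst q - fst u\<bar> > R" "\<bar>snd q - snd u\<bar> > R"
  proof (cases "\<bar>fst w - fst u\<bar> > R")
    case True
    then show ?thesis
      using that hole_vertical_line[OF R w True, of "snd u + R + 1"] \<open>\<bar>R + 1\<bar> > R\<close> by fastforce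
  next
    case False
    then have "\<bar>snd w - snd u\<bar> > R"
      using w_far by (auto simp: normInf_def)
    then show ?thesis
      using that hole_horizontal_line[OF R w, of "fst u + R + 1"] \<open>\<bar>R + 1\<bar> > R\<close> by fastforce
  qed
  have "z \<in> hole" if "normInf (z - u) > R" for z
  proof (cases "\<bar>fst z - fst u\<bar> > R")
    case True
    then show ?thesis
      using hole_horizontal_line[OF R q(1) q(3), of "fst z"]
        hole_vertical_line[OF R, of "(fst z, snd q)" "snd z"] by simp
  next
    case False
    then have "\<bar>snd z - snd u\<bar> > R"
      using that by (auto simp: normInf_def)
    then show ?thesis
      using hole_vertical_line[OF R q(1) q(2), of "snd z"]
        hole_horizontal_line[OF R, of "(fst q, snd z)" "fst z"] by simp
  qed
  then have "C \<subseteq> {z. normInf (z - u) \<le> R}"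
    using hole_disjoint_cluster by force
  then show False
    using infinite_cluster finite_normInf_ball finite_subset by blast
qed

text \<open>The extreme points of the hole in the wider coordinate direction lie on the boundary.\<close>

lemma hole_boundary_spans_hole:
  assumes fin: "finite hole"
  shows "\<exists>r\<in>hole_boundary. \<exists>y\<in>hole_boundary. \<forall>p\<in>hole. \<forall>q\<in>hole. normInf (p - q) \<le> normInf (y - r)"
proof -
  have ne: "hole \<noteq> {}"
    using u_in_hole by blast
  define a where "a = Min (fst ` hole)"
  define b where "b = Max (fst ` hole)"
  define c where "c = Min (snd ` hole)"
  define e where "e = Max (snd ` hole)"
  have bnd: "a \<le> fst p" "fst p \<le> b" "c \<le> snd p" "snd p \<le> e" if "p \<in> hole" for p
    using that fin unfolding a_def b_def c_def e_def by auto
  have "a \<in> fst ` hole" "b \<in> fst ` hole" "c \<in> snd ` hole" "e \<in> snd ` hole"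
    unfolding a_def b_def c_def e_def using fin ne by simp_all
  then obtain wa wb wc we where wa: "wa \<in> hole" "fst wa = a" and wb: "wb \<in> hole" "fst wb = b"
    and wc: "wc \<in> hole" "snd wc = c" and we: "we \<in> hole" "snd we = e"
    by blast
  have boundary: "wa \<in> hole_boundary" "wb \<in> hole_boundary" "wc \<in> hole_boundary" "we \<in> hole_boundary"
    using hole_boundaryI[OF wa(1), of "(a - 1, snd wa)"] bnd[of "(a - 1, snd wa)"] wa
      hole_boundaryI[OF wb(1), of "(b + 1, snd wb)"] bnd[of "(b + 1, snd wb)"] wb
      hole_boundaryI[OF wc(1), of "(fst wc, c - 1)"] bnd[of "(fst wc, c - 1)"] wc
      hole_boundaryI[OF we(1), of "(fst we, e + 1)"] bnd[of "(fst we, e + 1)"] we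
    by (force simp: sq_adj_def norm1_def)+
  have diam: "normInf (p - q) \<le> max (b - a) (e - c)" if "p \<in> hole" "q \<in> hole" for p q
    using bnd[OF that(1)] bnd[OF that(2)] by (auto simp: normInf_def)
  show ?thesis
  proof (cases "e - c \<le> b - a")
    case True
    then have "max (b - a) (e - c) \<le> normInf (wb - wa)"
      using wa wb by (auto simp: normInf_def)
    then show ?thesis
      using boundary(1,2) diam order_trans by blast
  next
    case False
    then have "max (b - a) (e - c) \<le> normInf (we - wc)"
      using wc we by (auto simp: normInf_def)
    then show ?thesis
      using boundary(3,4) diam order_trans by blast
  qed
qed

lemma hole_boundary_far_pair:
  assumes v: "v \<in> hole"
  shows "\<exists>r y. r \<in> hole_boundary \<and> y \<in> hole_boundary
                \<and> normInf (y - r) \<ge> normInf (v - u) \<and> normInf (y - r) \<ge> normInf (r - u)"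
proof (cases "\<exists>R. \<forall>w\<in>hole_boundary. normInf (w - u) \<le> R")
  case False
  then obtain r where r: "r \<in> hole_boundary"
    by (metis empty_iff)
  from False obtain y where y: "y \<in> hole_boundary"
    "\<not> normInf (y - u) \<le> normInf (v - u) + 2 * normInf (r - u)"
    by blast
  have "normInf (y - u) \<le> normInf (y - r) + normInf (r - u)"
    by (rule normInf_diff_triangle)
  then show ?thesis
    using r y normInf_nonneg[of "v - u"] normInf_nonneg[of "r - u"]
    by (intro exI[of _ r] exI[of _ y]) auto
next
  case True
  then obtain R where "\<And>w. w \<in> hole_boundary \<Longrightarrow> normInf (w - u) \<le> R"
    by blast
  then have "hole \<subseteq> {z. normInf (z - u) \<le> R}"
    using hole_bounded by blast
  then have "finite hole"
    using finite_normInf_ball by (rule finite_subset)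
  then obtain r y where "r \<in> hole_boundary" "y \<in> hole_boundary"
    "\<And>p q. p \<in> hole \<Longrightarrow> q \<in> hole \<Longrightarrow> normInf (p - q) \<le> normInf (y - r)"
    using hole_boundary_spans_hole by blast
  moreover have "r \<in> hole"
    using \<open>r \<in> hole_boundary\<close> unfolding hole_boundary_def by blast
  ultimately show ?thesis
    using v u_in_hole by blast
qed

lemma long_blocked_walk:
  assumes v: "v \<in> hole" and k: "normInf (v - u) \<ge> int k"
  shows "\<exists>r q. q \<in> bx_walks r (max k (nat (normInf (r - u)))) \<and> distinct q \<and> set q \<subseteq> B"
proof -
  obtain r y where ry: "r \<in> hole_boundary" "y \<in> hole_boundary"
    "normInf (y - r) \<ge> normInf (v - u)" "normInf (y - r) \<ge> normInf (r - u)"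
    using hole_boundary_far_pair[OF v] by blast
  define m where "m = max k (nat (normInf (r - u)))"
  obtain q0 where q0: "q0 \<noteq> []" "hd q0 = r" "last q0 = y" "set q0 \<subseteq> hole_boundary"
    "successively bx_adj q0"
    using rtranclp_restricted_imp_path[OF hole_boundary_bx_connected[OF ry(1,2)] ry(1)] by blast
  obtain q where q: "successively bx_adj q" "q \<noteq> []" "hd q = r" "last q = y"
    "distinct q" "set q \<subseteq> hole_boundary"
    using successively_remove_loops[OF q0(5,1)] q0(2-4) by (metis order_trans)
  have "int m \<le> normInf (y - r)"
    unfolding m_def using ry k normInf_nonneg[of "r - u"] by auto
  also have "normInf (y - r) \<le> int (length q) - 1"
    using normInf_last_hd_le[OF q(1,2)] q(3,4) by simp
  finally have len: "Suc m \<le> length q"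
    by linarith
  define q' where "q' = take (Suc m) q"
  have "successively bx_adj q'"
    using q(1) unfolding q'_def by (metis append_take_drop_id successively_append_iff)
  moreover have "length q' = Suc m" "hd q' = r" "distinct q'"
    using len q(2,3,5) unfolding q'_def by (simp_all add: hd_take)
  moreover have "set q' \<subseteq> B"
    using q(6) hole_boundary_subset_blocked set_take_subset[of "Suc m" q]
    unfolding q'_def by blast
  ultimately show ?thesis
    unfolding m_def bx_walks_def by blast
qed

lemma bx_path_avoiding_in_hole:
  "bx_path_avoiding C p \<Longrightarrow> hd p \<in> hole \<Longrightarrow> set p \<subseteq> hole"
proof (induction p rule: induct_list012)
  case (3 x y zs)
  then have "y \<in> hole"
    using hole_bx_step[of x y] by (simp add: bx_path_avoiding_def)
  then show ?case
    using "3.IH"(2) "3.prems" by (simp add: bx_path_avoiding_def)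
qed (auto simp: bx_path_avoiding_def)

end

lemma avoiding_path_imp_blocked_walk:
  assumes x: "x \<notin> B" "infinite (component sq_adj (- B) x)" "component sq_adj (- B) x \<subseteq> \<Psi>"
    and p: "bx_path_avoiding \<Psi> p" "hd p = u" "normInf (last p - u) \<ge> int k"
  shows "\<exists>r q. q \<in> bx_walks r (max k (nat (normInf (r - u)))) \<and> distinct q \<and> set q \<subseteq> B"
proof -
  define C where "C = component sq_adj (- B) x"
  have "x \<in> - B"
    using x(1) by simp
  have "u \<notin> C"
    using p x(3) hd_in_set[of p] unfolding C_def bx_path_avoiding_def by blast
  then interpret cluster_hole B C u x
  proof unfold_locales
    show "infinite C" "x \<in> C"
      unfolding C_def using x(2) component_refl by simp_all
    show "(\<lambda>a b. a \<in> C \<and> b \<in> C \<and> sq_adj a b)\<^sup>*\<^sup>* x z" if "z \<in> C" for z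
      using that component_rtranclp[OF _ \<open>x \<in> - B\<close>] unfolding C_def by blast
    show "w \<in> B" if "c \<in> C" "w \<notin> C" "sq_adj c w" for c w
      using that component_step[OF _ \<open>x \<in> - B\<close>] unfolding C_def by blast
  qed
  have "bx_path_avoiding C p"
    using p(1) x(3) unfolding C_def bx_path_avoiding_def by blast
  then have "set p \<subseteq> hole"
    using bx_path_avoiding_in_hole p(2) u_in_hole by blast
  then have "last p \<in> hole"
    using p(1) last_in_set unfolding bx_path_avoiding_def by blast
  then show ?thesis
    using long_blocked_walk p(3) by blast
qed

subsection \<open>Probabilistic estimates\<close>

lemma random_set_subset_measurable:
  assumes "random_set M B" "finite A"
  shows "{\<omega> \<in> space M. A \<subseteq> B \<omega>} \<in> sets M"
proof -
  have "{\<omega> \<in> space M. \<forall>z\<in>A. z \<in> B \<omega>} \<in> sets M"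
    using assms by (intro sets.sets_Collect_finite_All) (auto simp: random_set_def)
  moreover have "{\<omega> \<in> space M. \<forall>z\<in>A. z \<in> B \<omega>} = {\<omega> \<in> space M. A \<subseteq> B \<omega>}"
    by blast
  ultimately show ?thesis
    by simp
qed

lemma (in prob_space) rare_contains_some_measurable:
  assumes "rare M \<epsilon> B" "finite \<A>" "\<And>A. A \<in> \<A> \<Longrightarrow> finite A"
  shows "{\<omega> \<in> space M. \<exists>A\<in>\<A>. A \<subseteq> B \<omega>} \<in> sets M"
proof -
  have "{\<omega> \<in> space M. \<exists>A\<in>\<A>. A \<subseteq> B \<omega>} = (\<Union>A\<in>\<A>. {\<omega> \<in> space M. A \<subseteq> B \<omega>})"
    by blast
  then show ?thesis
    using assms random_set_subset_measurable[of M B] unfolding rare_def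
    by (auto intro!: sets.finite_UN)
qed

lemma (in prob_space) rare_contains_some_le:
  fixes \<epsilon> :: real
  assumes rare: "rare M \<epsilon> B" and "finite \<A>" "\<And>A. A \<in> \<A> \<Longrightarrow> finite A \<and> card A = n"
  shows "measure M {\<omega> \<in> space M. \<exists>A\<in>\<A>. A \<subseteq> B \<omega>} \<le> card \<A> * \<epsilon> ^ n"
proof -
  have "{\<omega> \<in> space M. \<exists>A\<in>\<A>. A \<subseteq> B \<omega>} = (\<Union>A\<in>\<A>. {\<omega> \<in> space M. A \<subseteq> B \<omega>})"
    by blast
  moreover have "measure M (\<Union>A\<in>\<A>. {\<omega> \<in> space M. A \<subseteq> B \<omega>})
                   \<le> (\<Sum>A\<in>\<A>. measure M {\<omega> \<in> space M. A \<subseteq> B \<omega>})"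
    using assms random_set_subset_measurable[of M B] unfolding rare_def
    by (intro measure_UNION_le) auto
  moreover have "(\<Sum>A\<in>\<A>. measure M {\<omega> \<in> space M. A \<subseteq> B \<omega>}) \<le> (\<Sum>A\<in>\<A>. \<epsilon> ^ n)"
    using assms by (intro sum_mono) (auto simp: rare_def)
  ultimately show ?thesis
    by simp
qed

lemma linear_le_exponential: "8 * real j + 1 \<le> 8 * (3/2) ^ j"
proof (induction j)
  case (Suc j)
  show ?case
  proof (cases "j \<le> 1")
    case True
    then have "j = 0 \<or> j = 1"
      by auto
    then show ?thesis
      by auto
  next
    case False
    then have "(9/4::real) \<le> (3/2) ^ j"
      using power_increasing[of 2 j "3/2 :: real"] by (simp add: power2_eq_square)
    then show ?thesis
      using Suc.IH by simp
  qed
qed simp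

text \<open>The union bound over the starting point \<open>r\<close> of a blocked walk at distance \<open>j\<close> from \<open>u\<close>
  (at most \<open>8j + 1\<close> choices) and over the walk itself (at most \<open>8\<^sup>L\<close> with \<open>L = max k j\<close> steps).\<close>

lemma shell_term_le:
  fixes \<epsilon> :: real
  assumes "0 \<le> \<epsilon>" "\<epsilon> \<le> 1/21"
  shows "(8 * real j + 1) * (8 ^ max k j * \<epsilon> ^ Suc (max k j)) \<le> 8 * 21 ^ k * \<epsilon> ^ Suc k * (4/7) ^ j"
proof -
  define L where "L = max k j"
  obtain t where L: "L = k + t"
    using le_Suc_ex[of k L] unfolding L_def by auto
  have "8 ^ L * \<epsilon> ^ Suc L = 8 ^ L * \<epsilon> ^ t * \<epsilon> ^ Suc k"
    by (simp add: L power_add)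
  also have "\<dots> \<le> 8 ^ L * (1/21) ^ t * \<epsilon> ^ Suc k"
    using assms by (intro mult_right_mono mult_left_mono power_mono) auto
  also have "\<dots> = (8/21) ^ L * 21 ^ k * \<epsilon> ^ Suc k"
    by (simp add: L power_add power_divide field_simps)
  also have "\<dots> \<le> (8/21) ^ j * 21 ^ k * \<epsilon> ^ Suc k"
    using assms by (intro mult_right_mono power_decreasing) (auto simp: L_def)
  finally have "(8 * real j + 1) * (8 ^ L * \<epsilon> ^ Suc L)
                  \<le> 8 * (3/2) ^ j * ((8/21) ^ j * 21 ^ k * \<epsilon> ^ Suc k)"
    by (rule mult_mono[OF linear_le_exponential]) (use assms in auto)
  also have "\<dots> = 8 * 21 ^ k * \<epsilon> ^ Suc k * (4/7) ^ j"
    by (simp add: power_mult_distrib[symmetric])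
  finally show ?thesis
    unfolding L_def .
qed

definition walk_sets :: "pt \<Rightarrow> nat \<Rightarrow> nat \<Rightarrow> pt set set" where
  "walk_sets u L j = (\<Union>r\<in>{r. normInf (r - u) = int j}. set ` {q \<in> bx_walks r L. distinct q})"

lemma finite_walk_sets: "finite (walk_sets u L j)"
proof -
  have "finite {r. normInf (r - u) = int j}"
    by (rule finite_subset[OF _ finite_normInf_ball[of u "int j"]]) auto
  then show ?thesis
    unfolding walk_sets_def using finite_bx_walks by auto
qed

lemma walk_sets_member: "A \<in> walk_sets u L j \<Longrightarrow> finite A \<and> card A = Suc L"
  by (auto simp: walk_sets_def bx_walks_def distinct_card)

lemma card_walk_sets: "real (card (walk_sets u L j)) \<le> (8 * real j + 1) * 8 ^ L"
proof -
  have finite_sphere: "finite {r. normInf (r - u) = int j}"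
    by (rule finite_subset[OF _ finite_normInf_ball[of u "int j"]]) auto
  have "card (set ` {q \<in> bx_walks r L. distinct q}) \<le> 8 ^ L" for r
  proof -
    have "card (set ` {q \<in> bx_walks r L. distinct q}) \<le> card {q \<in> bx_walks r L. distinct q}"
      by (rule card_image_le) (simp add: finite_bx_walks)
    also have "\<dots> \<le> card (bx_walks r L)"
      by (rule card_mono[OF finite_bx_walks]) blast
    finally show ?thesis
      using card_bx_walks order_trans by blast
  qed
  then have "(\<Sum>r\<in>{r. normInf (r - u) = int j}. card (set ` {q \<in> bx_walks r L. distinct q}))
               \<le> (\<Sum>r\<in>{r. normInf (r - u) = int j}. 8 ^ L)"
    by (rule sum_mono)
  with card_UN_le[OF finite_sphere]
  have "card (walk_sets u L j) \<le> (\<Sum>r\<in>{r. normInf (r - u) = int j}. 8 ^ L)"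
    unfolding walk_sets_def by (rule order_trans)
  also have "\<dots> \<le> (8 * j + 1) * 8 ^ L"
    using card_normInf_sphere[of u j] by (simp add: mult_right_mono del: mult_Suc)
  finally have "real (card (walk_sets u L j)) \<le> real ((8 * j + 1) * 8 ^ L)"
    by (rule of_nat_mono)
  then show ?thesis
    by (simp only: of_nat_mult of_nat_add of_nat_power of_nat_numeral of_nat_1)
qed

lemma (in prob_space) prob_walk_sets_le:
  assumes rare: "rare M \<epsilon> B" and \<epsilon>: "0 \<le> \<epsilon>" "\<epsilon> \<le> 1/21"
  shows "prob {\<omega> \<in> space M. \<exists>A\<in>walk_sets u (max k j) j. A \<subseteq> B \<omega>}
           \<le> 8 * 21 ^ k * \<epsilon> ^ Suc k * (4/7) ^ j"
proof -
  have "prob {\<omega> \<in> space M. \<exists>A\<in>walk_sets u (max k j) j. A \<subseteq> B \<omega>}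
          \<le> card (walk_sets u (max k j) j) * \<epsilon> ^ Suc (max k j)"
    using rare finite_walk_sets walk_sets_member by (rule rare_contains_some_le)
  also have "\<dots> \<le> (8 * real j + 1) * 8 ^ max k j * \<epsilon> ^ Suc (max k j)"
    by (rule mult_right_mono[OF card_walk_sets]) (use \<epsilon>(1) in simp)
  also have "\<dots> \<le> 8 * 21 ^ k * \<epsilon> ^ Suc k * (4/7) ^ j"
    using shell_term_le[OF \<epsilon>] by (simp only: mult.assoc)
  finally show ?thesis .
qed

lemma (in prob_space) prob_some_walk_set_le:
  assumes rare: "rare M \<epsilon> B" and \<epsilon>: "0 \<le> \<epsilon>" "\<epsilon> \<le> 1/21"
  shows "prob (\<Union>j. {\<omega> \<in> space M. \<exists>A\<in>walk_sets u (max k j) j. A \<subseteq> B \<omega>}) \<le> (21 * \<epsilon>) ^ Suc k"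
proof -
  define Y where "Y j = {\<omega> \<in> space M. \<exists>A\<in>walk_sets u (max k j) j. A \<subseteq> B \<omega>}" for j
  define K where "K = 8 * 21 ^ k * \<epsilon> ^ Suc k"
  have Y_sets: "Y j \<in> sets M" for j
    unfolding Y_def using walk_sets_member
    by (intro rare_contains_some_measurable[OF rare finite_walk_sets]) blast
  have Y_le: "prob (Y j) \<le> K * (4/7) ^ j" for j
    unfolding Y_def K_def using rare \<epsilon> by (rule prob_walk_sets_le)
  have summable: "summable (\<lambda>j. K * (4/7::real) ^ j)"
    by (intro summable_mult summable_geometric) simp
  have Y_summable: "summable (\<lambda>j. prob (Y j))"
    by (rule summable_comparison_test'[OF summable]) (use Y_le in simp)
  have "prob (\<Union>j. Y j) \<le> (\<Sum>j. prob (Y j))"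
    using Y_sets Y_summable by (intro finite_measure_subadditive_countably) auto
  also have "\<dots> \<le> (\<Sum>j. K * (4/7) ^ j)"
    using Y_le Y_summable summable by (rule suminf_le)
  also have "\<dots> = K * (7/3)"
    by (simp add: suminf_mult summable_geometric suminf_geometric)
  also have "\<dots> \<le> (21 * \<epsilon>) ^ Suc k"
    using \<epsilon>(1) unfolding K_def by (simp add: power_mult_distrib)
  finally show ?thesis
    unfolding Y_def .
qed

lemma (in prob_space) long_avoiding_path_prob_le:
  assumes rare: "rare M \<epsilon> B" and \<epsilon>: "0 \<le> \<epsilon>" "\<epsilon> \<le> 1/21"
    and cluster: "AE \<omega> in M. \<exists>x. x \<notin> B \<omega> \<and> infinite (component sq_adj (- B \<omega>) x)
                                 \<and> component sq_adj (- B \<omega>) x \<subseteq> \<Psi> \<omega>"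
  shows "prob {\<omega> \<in> space M. \<exists>p. bx_path_avoiding (\<Psi> \<omega>) p \<and> hd p = u
                 \<and> normInf (last p - u) \<ge> int k} \<le> (21 * \<epsilon>) ^ Suc k"
    (is "prob ?E \<le> _")
proof -
  define Y where "Y j = {\<omega> \<in> space M. \<exists>A\<in>walk_sets u (max k j) j. A \<subseteq> B \<omega>}" for j
  have Y_sets: "Y j \<in> sets M" for j
    unfolding Y_def using walk_sets_member
    by (intro rare_contains_some_measurable[OF rare finite_walk_sets]) blast
  obtain N where N: "{\<omega> \<in> space M. \<not> (\<exists>x. x \<notin> B \<omega> \<and> infinite (component sq_adj (- B \<omega>) x)
                              \<and> component sq_adj (- B \<omega>) x \<subseteq> \<Psi> \<omega>)} \<subseteq> N"
    "emeasure M N = 0" "N \<in> events"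
    using cluster by (rule AE_E)
  have "?E \<subseteq> N \<union> (\<Union>j. Y j)"
  proof
    fix \<omega>
    assume "\<omega> \<in> ?E"
    then obtain p where \<omega>: "\<omega> \<in> space M" and
      p: "bx_path_avoiding (\<Psi> \<omega>) p" "hd p = u" "normInf (last p - u) \<ge> int k"
      by blast
    show "\<omega> \<in> N \<union> (\<Union>j. Y j)"
    proof (cases "\<omega> \<in> N")
      case False
      then obtain x where "x \<notin> B \<omega>" "infinite (component sq_adj (- B \<omega>) x)"
        "component sq_adj (- B \<omega>) x \<subseteq> \<Psi> \<omega>"
        using N(1) \<omega> by blast
      then obtain r q where q: "q \<in> bx_walks r (max k (nat (normInf (r - u))))" "distinct q"
        and "set q \<subseteq> B \<omega>"
        using avoiding_path_imp_blocked_walk p by blast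
      have "set q \<in> walk_sets u (max k (nat (normInf (r - u)))) (nat (normInf (r - u)))"
        unfolding walk_sets_def using q normInf_nonneg[of "r - u"] by (intro UN_I[of r]) auto
      then have "\<omega> \<in> Y (nat (normInf (r - u)))"
        using \<omega> \<open>set q \<subseteq> B \<omega>\<close> unfolding Y_def by blast
      then show ?thesis
        by blast
    qed simp
  qed
  then have "prob ?E \<le> prob (N \<union> (\<Union>j. Y j))"
    using N(3) Y_sets by (intro finite_measure_mono) auto
  also have "\<dots> \<le> prob N + prob (\<Union>j. Y j)"
    using N(3) Y_sets by (intro measure_Un_le) auto
  finally show ?thesis
    using prob_some_walk_set_le[OF rare \<epsilon>, of u k] N(2) unfolding Y_def by (simp add: measure_def)
qed

lemma le_powr_Inf:
  fixes m c a :: real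
  assumes "S \<noteq> {}" "\<And>\<epsilon>. \<epsilon> \<in> S \<Longrightarrow> 0 \<le> \<epsilon> \<and> m \<le> (\<epsilon> / c) powr a" "0 \<le> m" "0 < a" "0 < c"
  shows "m \<le> (Inf S / c) powr a"
proof -
  have "c * m powr (1 / a) \<le> \<epsilon>" if "\<epsilon> \<in> S" for \<epsilon>
  proof -
    have "m powr (1 / a) \<le> ((\<epsilon> / c) powr a) powr (1 / a)"
      using assms that by (intro powr_mono2) auto
    also have "\<dots> = \<epsilon> / c"
      using assms that by (simp add: powr_powr)
    finally show ?thesis
      using assms(5) by (simp add: field_simps)
  qed
  then have "c * m powr (1 / a) \<le> Inf S"
    using assms(1) by (intro cInf_greatest) auto
  then have "(m powr (1 / a)) powr a \<le> (Inf S / c) powr a"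
    using assms(4,5) by (intro powr_mono2) (auto simp: field_simps)
  then show ?thesis
    using assms(3,4) by (simp add: powr_powr)
qed

lemma (in prob_space) percolating_long_path_prob_le:
  assumes perc: "strongly_percolating M \<epsilon> \<Psi>" and "0 \<le> \<epsilon>" "0 \<le> d"
  shows "prob {\<omega> \<in> space M. \<exists>p. bx_path_avoiding (\<Psi> \<omega>) p \<and> hd p = u
                 \<and> real_of_int (normInf (last p - u)) \<ge> d} \<le> (\<epsilon> / eps0) powr (1 + d)"
    (is "prob ?E \<le> _")
proof (cases "\<epsilon> \<ge> eps0")
  case True
  then have "1 \<le> (\<epsilon> / eps0) powr (1 + d)"
    using \<open>0 \<le> d\<close> by (intro ge_one_powr_ge_zero) (auto simp: eps0_def)
  then show ?thesis
    using prob_le_1 order_trans by blast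
next
  case False
  then obtain B where "rare M \<epsilon> B" and
    "AE \<omega> in M. \<exists>x. x \<notin> B \<omega> \<and> infinite (component sq_adj (- B \<omega>) x)
                    \<and> component sq_adj (- B \<omega>) x \<subseteq> \<Psi> \<omega>"
    using perc unfolding strongly_percolating_def by auto
  moreover have "\<epsilon> \<le> 1/21"
    using False by (simp add: eps0_def)
  moreover have "?E = {\<omega> \<in> space M. \<exists>p. bx_path_avoiding (\<Psi> \<omega>) p \<and> hd p = u
                          \<and> normInf (last p - u) \<ge> int (nat \<lceil>d\<rceil>)}"
    using \<open>0 \<le> d\<close> by (simp add: ceiling_le_iff)
  ultimately have "prob ?E \<le> (\<epsilon> / eps0) ^ Suc (nat \<lceil>d\<rceil>)"
    using long_avoiding_path_prob_le[of \<epsilon> B \<Psi> u "nat \<lceil>d\<rceil>"] \<open>0 \<le> \<epsilon>\<close>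
    by (simp add: eps0_def field_simps)
  also have "\<dots> \<le> (\<epsilon> / eps0) powr (1 + d)"
  proof (cases "\<epsilon> = 0")
    case False
    then have "0 < \<epsilon> / eps0"
      using \<open>0 \<le> \<epsilon>\<close> by (simp add: eps0_def)
    then have "(\<epsilon> / eps0) ^ Suc (nat \<lceil>d\<rceil>) = (\<epsilon> / eps0) powr real (Suc (nat \<lceil>d\<rceil>))"
      by (rule powr_realpow[symmetric])
    also have "\<dots> \<le> (\<epsilon> / eps0) powr (1 + d)"
      using \<open>0 \<le> \<epsilon>\<close> \<open>\<epsilon> \<le> 1/21\<close> \<open>0 \<le> d\<close> by (intro powr_mono') (auto simp: eps0_def)
    finally show ?thesis .
  qed simp
  finally show ?thesis .
qed

theorem lemma6p4:
  fixes M :: "'a measure" and \<Psi> :: "'a \<Rightarrow> (int \<times> int) set" and u :: "int \<times> int" and d :: real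
  assumes "prob_space M"
    and "random_set M \<Psi>"
    and "d \<ge> 0"
  shows "measure M {\<omega> \<in> space M. \<exists>p. bx_path_avoiding (\<Psi> \<omega>) p \<and> hd p = u
            \<and> real_of_int (normInf (last p - u)) \<ge> d}
         \<le> (perc M \<Psi> / eps0) powr (1 + d)"
proof -
  interpret prob_space M
    by (rule assms(1))
  show ?thesis
    unfolding perc_def
  proof (rule le_powr_Inf)
    have "eps0 \<in> {\<epsilon>. \<epsilon> \<ge> 0 \<and> strongly_percolating M \<epsilon> \<Psi>}"
      by (simp add: strongly_percolating_def eps0_def)
    then show "{\<epsilon>. \<epsilon> \<ge> 0 \<and> strongly_percolating M \<epsilon> \<Psi>} \<noteq> {}"
      by blast
  qed (use assms(3) percolating_long_path_prob_le in \<open>auto simp: eps0_def\<close>)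
qed

end
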